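(* Let $X$ be a topological space, let $Y$ and $Z$ be locally compact Hausdorff spaces, let $f_1\colon X\to Y$ be continuous and let $f_2\colon Y\to Z$ be proper and continuous. Then $\beta_Y(X,f_1)\cong\beta_Z(X,f_2\circ f_1)$.
   Context: For a locally compact Hausdorff space $B$ and a space $X$ with continuous $r\colon X\to B$, let $H_{(X,r)}\subseteq\mathrm{C_b}(X)$ be the closed linear span of products $g\cdot(h\circ r)$ with $g\in\mathrm{C_b}(X)$, $h\in\mathrm C_0(B)$; the relative Stone--Čech compactification $\beta_B(X,r)$ is the spectrum of the commutative C*-algebra $H_{(X,r)}$, with canonical map $i\colon X\to\beta_B(X,r)$ sending $x$ to evaluation at $x$. *)

theory Defs
  imports "HOL-Analysis.Analysis"
begin

text \<open>Complex-valued functions on the points of a topological space, normalised to be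
  zero outside the topological carrier (so that the sup norm is a genuine norm).\<close>

definition Cb :: "'a topology \<Rightarrow> ('a \<Rightarrow> complex) set" where
  "Cb X = {g. continuous_map X euclidean g \<and> bounded (g ` topspace X) \<and>
              (\<forall>x. x \<notin> topspace X \<longrightarrow> g x = 0)}"

definition C0 :: "'b topology \<Rightarrow> ('b \<Rightarrow> complex) set" where
  "C0 B = {h. continuous_map B euclidean h \<and>
              (\<forall>e>0. \<exists>K. compactin B K \<and> (\<forall>y \<in> topspace B - K. norm (h y) < e)) \<and>
              (\<forall>y. y \<notin> topspace B \<longrightarrow> h y = 0)}"

definition lin_span :: "('a \<Rightarrow> complex) set \<Rightarrow> ('a \<Rightarrow> complex) set" where
  "lin_span S = {f. \<exists>n (c::nat \<Rightarrow> complex) p. (\<forall>i<n. p i \<in> S) \<and>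
                     f = (\<lambda>x. \<Sum>i<n. c i * p i x)}"

definition gens :: "'a topology \<Rightarrow> 'b topology \<Rightarrow> ('a \<Rightarrow> 'b) \<Rightarrow> ('a \<Rightarrow> complex) set" where
  "gens X B r = {(\<lambda>x. g x * h (r x)) | g h. g \<in> Cb X \<and> h \<in> C0 B}"

definition Halg :: "'a topology \<Rightarrow> 'b topology \<Rightarrow> ('a \<Rightarrow> 'b) \<Rightarrow> ('a \<Rightarrow> complex) set" where
  "Halg X B r = {g \<in> Cb X. \<forall>e>0. \<exists>s \<in> lin_span (gens X B r).
                    \<forall>x \<in> topspace X. norm (g x - s x) \<le> e}"

text \<open>Characters (nonzero multiplicative complex-linear functionals) of an algebra A of
  functions, represented as elements of the product space indexed by A.\<close>
definition characters :: "('a \<Rightarrow> complex) set \<Rightarrow> (('a \<Rightarrow> complex) \<Rightarrow> complex) set" where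
  "characters A = {\<phi>. (\<forall>f \<in> A. \<forall>g \<in> A. \<phi> (\<lambda>x. f x + g x) = \<phi> f + \<phi> g) \<and>
                      (\<forall>f \<in> A. \<forall>c. \<phi> (\<lambda>x. c * f x) = c * \<phi> f) \<and>
                      (\<forall>f \<in> A. \<forall>g \<in> A. \<phi> (\<lambda>x. f x * g x) = \<phi> f * \<phi> g) \<and>
                      (\<exists>f \<in> A. \<phi> f \<noteq> 0) \<and>
                      (\<forall>f. f \<notin> A \<longrightarrow> \<phi> f = undefined)}"

text \<open>Gelfand spectrum with the weak-* topology (= subspace of the product topology).\<close>
definition spectrum_top :: "('a \<Rightarrow> complex) set \<Rightarrow> (('a \<Rightarrow> complex) \<Rightarrow> complex) topology" where
  "spectrum_top A = subtopology (product_topology (\<lambda>_. euclidean) A) (characters A)"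

definition rel_beta :: "'a topology \<Rightarrow> 'b topology \<Rightarrow> ('a \<Rightarrow> 'b) \<Rightarrow> (('a \<Rightarrow> complex) \<Rightarrow> complex) topology" where
  "rel_beta X B r = spectrum_top (Halg X B r)"

end

theory Submission
  imports Defs
begin

text \<open>The two relative compactifications are spectra of the same algebra:
  \<open>H\<^bsub>(X,f\<^sub>1)\<^esub> = H\<^bsub>(X,f\<^sub>2 \<circ> f\<^sub>1)\<^esub>\<close>. Since \<open>f\<^sub>2\<close> is proper, \<open>h \<circ> f\<^sub>2 \<in> C\<^sub>0(Y)\<close> for \<open>h \<in> C\<^sub>0(Z)\<close>,
  so every generator \<open>g \<cdot> (h \<circ> f\<^sub>2 \<circ> f\<^sub>1)\<close> is also a generator for \<open>(X,f\<^sub>1)\<close>. Conversely,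
  given \<open>g \<cdot> (h \<circ> f\<^sub>1)\<close> with \<open>h \<in> C\<^sub>0(Y)\<close>, pick a compact \<open>K \<subseteq> Y\<close> outside of which \<open>h\<close> is
  small and an Urysohn function \<open>k \<in> C\<^sub>0(Z)\<close> equal to \<open>1\<close> on \<open>f\<^sub>2(K)\<close>; then
  \<open>(g \<cdot> (h \<circ> f\<^sub>1)) \<cdot> (k \<circ> f\<^sub>2 \<circ> f\<^sub>1)\<close> is a generator for \<open>(X,f\<^sub>2 \<circ> f\<^sub>1)\<close> uniformly close
  to it.\<close>

lemma lin_span_zero: "(\<lambda>x. 0) \<in> lin_span S"
  unfolding lin_span_def by (intro CollectI exI[of _ 0]) simp

lemma lin_span_add_scaled:
  assumes "s \<in> lin_span S" "p \<in> S"
  shows "(\<lambda>x. s x + c * p x) \<in> lin_span S"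
proof -
  obtain n :: nat and d q where q: "\<forall>i<n. q i \<in> S" and s: "s = (\<lambda>x. \<Sum>i<n. d i * q i x)"
    using assms(1) unfolding lin_span_def by blast
  have "(\<lambda>x. s x + c * p x) = (\<lambda>x. \<Sum>i<Suc n. (d(n:=c)) i * (q(n:=p)) i x)"
    by (simp add: s)
  moreover have "\<forall>i<Suc n. (q(n:=p)) i \<in> S"
    using q assms(2) by (simp add: less_Suc_eq)
  ultimately show ?thesis
    unfolding lin_span_def by blast
qed

lemma lin_span_superset: "p \<in> S \<Longrightarrow> p \<in> lin_span S"
  using lin_span_add_scaled[OF lin_span_zero, of p S 1] by simp

lemma lin_span_induct:
  assumes "(\<lambda>x. 0) \<in> A"
    and "\<And>s c p. s \<in> A \<Longrightarrow> p \<in> S \<Longrightarrow> (\<lambda>x. s x + c * p x) \<in> A"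
  shows "lin_span S \<subseteq> A"
proof
  fix s assume "s \<in> lin_span S"
  then obtain n :: nat and d p where p: "\<forall>i<n. p i \<in> S" and s: "s = (\<lambda>x. \<Sum>i<n. d i * p i x)"
    unfolding lin_span_def by blast
  have "(\<lambda>x. \<Sum>i<m. d i * p i x) \<in> A" if "m \<le> n" for m
    using that
  proof (induction m)
    case 0
    then show ?case using assms(1) by simp
  next
    case (Suc m)
    then show ?case using assms(2)[of "\<lambda>x. \<Sum>i<m. d i * p i x" "p m" "d m"] p by simp
  qed
  then show "s \<in> A" using s by blast
qed

lemma lin_span_add:
  assumes "s \<in> lin_span S" "t \<in> lin_span S"
  shows "(\<lambda>x. s x + t x) \<in> lin_span S"
proof -
  have "lin_span S \<subseteq> {t. (\<lambda>x. s x + t x) \<in> lin_span S}"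
  proof (rule lin_span_induct)
    fix t c p assume "t \<in> {t. (\<lambda>x. s x + t x) \<in> lin_span S}" "p \<in> S"
    then have "(\<lambda>x. (s x + t x) + c * p x) \<in> lin_span S"
      using lin_span_add_scaled by fastforce
    then show "(\<lambda>x. t x + c * p x) \<in> {t. (\<lambda>x. s x + t x) \<in> lin_span S}"
      by (simp add: add.assoc)
  qed (use assms(1) in simp)
  then show ?thesis using assms(2) by blast
qed

lemma lin_span_scale:
  assumes "s \<in> lin_span S"
  shows "(\<lambda>x. a * s x) \<in> lin_span S"
proof -
  have "lin_span S \<subseteq> {s. (\<lambda>x. a * s x) \<in> lin_span S}"
  proof (rule lin_span_induct)
    fix s c p assume "s \<in> {s. (\<lambda>x. a * s x) \<in> lin_span S}" "p \<in> S"
    then have "(\<lambda>x. a * s x + (a * c) * p x) \<in> lin_span S"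
      using lin_span_add_scaled by fastforce
    then show "(\<lambda>x. s x + c * p x) \<in> {s. (\<lambda>x. a * s x) \<in> lin_span S}"
      by (simp add: distrib_left mult.assoc)
  qed (simp add: lin_span_zero)
  then show ?thesis using assms by blast
qed

definition uniformly_approximable :: "'a topology \<Rightarrow> ('a \<Rightarrow> complex) set \<Rightarrow> ('a \<Rightarrow> complex) \<Rightarrow> bool"
  where "uniformly_approximable X S g \<longleftrightarrow>
           (\<forall>e>0. \<exists>s \<in> lin_span S. \<forall>x \<in> topspace X. norm (g x - s x) \<le> e)"

lemma Halg_eq_uniformly_approximable:
  "Halg X B r = {g \<in> Cb X. uniformly_approximable X (gens X B r) g}"
  unfolding Halg_def uniformly_approximable_def by simp

lemma uniformly_approximable_lin_span:
  "s \<in> lin_span S \<Longrightarrow> uniformly_approximable X S s"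
  unfolding uniformly_approximable_def by force

lemma uniformly_approximable_add:
  assumes "uniformly_approximable X S f" "uniformly_approximable X S g"
  shows "uniformly_approximable X S (\<lambda>x. f x + g x)"
  unfolding uniformly_approximable_def
proof (intro allI impI)
  fix e :: real assume "e > 0"
  then obtain s t where st: "s \<in> lin_span S" "t \<in> lin_span S"
    and "\<forall>x \<in> topspace X. norm (f x - s x) \<le> e/2" "\<forall>x \<in> topspace X. norm (g x - t x) \<le> e/2"
    using assms unfolding uniformly_approximable_def by (meson half_gt_zero)
  then have "\<forall>x \<in> topspace X. norm ((f x + g x) - (s x + t x)) \<le> e"
    by (smt (verit, best) add_diff_add field_sum_of_halves norm_triangle_ineq)
  then show "\<exists>u \<in> lin_span S. \<forall>x \<in> topspace X. norm ((f x + g x) - u x) \<le> e"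
    by (intro bexI[OF _ lin_span_add[OF st]]) simp
qed

lemma uniformly_approximable_scale:
  assumes "uniformly_approximable X S f"
  shows "uniformly_approximable X S (\<lambda>x. c * f x)"
proof (cases "c = 0")
  case True
  then show ?thesis using uniformly_approximable_lin_span[OF lin_span_zero] by simp
next
  case False
  show ?thesis
    unfolding uniformly_approximable_def
  proof (intro allI impI)
    fix e :: real assume "e > 0"
    then have "e / norm c > 0"
      using False by simp
    then obtain s where s: "s \<in> lin_span S" "\<forall>x \<in> topspace X. norm (f x - s x) \<le> e / norm c"
      using assms unfolding uniformly_approximable_def by blast
    have "norm (c * f x - c * s x) \<le> e" if "x \<in> topspace X" for x
    proof -
      have "norm (c * f x - c * s x) = norm c * norm (f x - s x)"
        by (simp add: right_diff_distrib[symmetric] norm_mult)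
      then show ?thesis
        using s(2) that False by (simp add: pos_le_divide_eq mult.commute)
    qed
    then show "\<exists>u \<in> lin_span S. \<forall>x \<in> topspace X. norm (c * f x - u x) \<le> e"
      by (intro bexI[OF _ lin_span_scale[OF s(1), of c]]) simp
  qed
qed

lemma uniformly_approximable_lin_span_of:
  assumes "\<forall>p \<in> S. uniformly_approximable X T p" "s \<in> lin_span S"
  shows "uniformly_approximable X T s"
proof -
  have "lin_span S \<subseteq> {s. uniformly_approximable X T s}"
    by (rule lin_span_induct)
      (simp_all add: assms(1) uniformly_approximable_lin_span[OF lin_span_zero]
        uniformly_approximable_add uniformly_approximable_scale)
  then show ?thesis using assms(2) by blast
qed

lemma uniformly_approximable_trans:
  assumes "\<forall>p \<in> S. uniformly_approximable X T p" "uniformly_approximable X S g"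
  shows "uniformly_approximable X T g"
  unfolding uniformly_approximable_def
proof (intro allI impI)
  fix e :: real assume "e > 0"
  then obtain s where s: "s \<in> lin_span S" "\<forall>x \<in> topspace X. norm (g x - s x) \<le> e/2"
    using assms(2) unfolding uniformly_approximable_def by (meson half_gt_zero)
  obtain t where t: "t \<in> lin_span T" "\<forall>x \<in> topspace X. norm (s x - t x) \<le> e/2"
    using uniformly_approximable_lin_span_of[OF assms(1) s(1)] \<open>e > 0\<close>
    unfolding uniformly_approximable_def by (meson half_gt_zero)
  have "\<forall>x \<in> topspace X. norm (g x - t x) \<le> e"
    using s(2) t(2) by (smt (verit, best) field_sum_of_halves norm_diff_triangle_le)
  then show "\<exists>u \<in> lin_span T. \<forall>x \<in> topspace X. norm (g x - u x) \<le> e"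
    using t(1) by blast
qed

lemma continuous_map_of_real:
  "continuous_map X euclideanreal f
    \<Longrightarrow> continuous_map X euclidean (\<lambda>x. of_real (f x) :: 'b::real_normed_algebra_1)"
  by (simp add: continuous_map_atin tendsto_of_real)

lemma continuous_map_mult:
  fixes f g :: "'a \<Rightarrow> 'b::real_normed_algebra"
  shows "continuous_map X euclidean f \<Longrightarrow> continuous_map X euclidean g
    \<Longrightarrow> continuous_map X euclidean (\<lambda>x. f x * g x)"
  by (simp add: continuous_map_atin tendsto_mult)

lemma Cb_bound:
  assumes "g \<in> Cb X"
  obtains M where "M > 0" "\<forall>x \<in> topspace X. norm (g x) \<le> M"
  using assms unfolding Cb_def bounded_pos by auto

lemma C0_bound:
  assumes "h \<in> C0 B"
  obtains M where "\<forall>y \<in> topspace B. norm (h y) \<le> M"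
proof -
  have "\<forall>e>0. \<exists>K. compactin B K \<and> (\<forall>y \<in> topspace B - K. norm (h y) < e)"
    using assms unfolding C0_def by blast
  then obtain K where K: "compactin B K" "\<forall>y \<in> topspace B - K. norm (h y) < 1"
    using zero_less_one by blast
  have "continuous_map B euclidean h"
    using assms unfolding C0_def by blast
  then have "compact (h ` K)"
    using image_compactin[OF K(1)] compactin_euclidean_iff by blast
  then obtain M where M: "\<forall>z \<in> h ` K. norm z \<le> M"
    using compact_imp_bounded bounded_iff by metis
  have "norm (h y) \<le> max M 1" if "y \<in> topspace B" for y
    using M K(2) that by (cases "y \<in> K") force+
  then show thesis
    using that by blast
qed

lemma Cb_mult_comp:
  assumes "g \<in> Cb X" "continuous_map X Y f" "continuous_map Y euclidean h"
    and "\<forall>y \<in> topspace Y. norm (h y) \<le> M"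
  shows "(\<lambda>x. g x * h (f x)) \<in> Cb X"
  unfolding Cb_def
proof (intro CollectI conjI allI impI)
  have "continuous_map X euclidean (\<lambda>x. h (f x))"
    using continuous_map_compose[OF assms(2,3)] by (simp add: o_def)
  moreover have "continuous_map X euclidean g"
    using assms(1) unfolding Cb_def by blast
  ultimately show "continuous_map X euclidean (\<lambda>x. g x * h (f x))"
    by (rule continuous_map_mult[rotated])
next
  obtain N where N: "N > 0" "\<forall>x \<in> topspace X. norm (g x) \<le> N"
    using Cb_bound[OF assms(1)] .
  have "norm (g x * h (f x)) \<le> N * M" if x: "x \<in> topspace X" for x
  proof -
    have "f x \<in> topspace Y"
      using x continuous_map_image_subset_topspace[OF assms(2)] by blast
    then show ?thesis
      unfolding norm_mult using N x assms(4) by (intro mult_mono) auto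
  qed
  then show "bounded ((\<lambda>x. g x * h (f x)) ` topspace X)"
    unfolding bounded_iff by blast
next
  show "g x * h (f x) = 0" if "x \<notin> topspace X" for x
    using assms(1) that unfolding Cb_def by simp
qed

lemma C0_comp_proper_map:
  assumes "proper_map Y Z f" "continuous_map Y Z f" "h \<in> C0 Z"
  shows "(\<lambda>y. if y \<in> topspace Y then h (f y) else 0) \<in> C0 Y"
  unfolding C0_def
proof (intro CollectI conjI allI impI)
  have "continuous_map Y euclidean (h \<circ> f)"
    using continuous_map_compose assms(2,3) unfolding C0_def by blast
  then show "continuous_map Y euclidean (\<lambda>y. if y \<in> topspace Y then h (f y) else 0)"
    by (rule continuous_map_eq) simp
next
  fix e :: real assume "e > 0"
  then obtain K where K: "compactin Z K" "\<forall>z \<in> topspace Z - K. norm (h z) < e"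
    using assms(3) unfolding C0_def by blast
  have "compactin Y {y \<in> topspace Y. f y \<in> K}"
    using compactin_proper_map_preimage[OF assms(1) K(1)] .
  moreover have "\<forall>y \<in> topspace Y - {y \<in> topspace Y. f y \<in> K}.
      norm (if y \<in> topspace Y then h (f y) else 0) < e"
    using K(2) assms(2) by (auto simp: continuous_map_def)
  ultimately show "\<exists>K. compactin Y K \<and>
      (\<forall>y \<in> topspace Y - K. norm (if y \<in> topspace Y then h (f y) else 0) < e)"
    by blast
qed simp

lemma gens_comp_proper_map_subset:
  assumes "proper_map Y Z f2" "continuous_map Y Z f2" "continuous_map X Y f1"
  shows "gens X Z (f2 \<circ> f1) \<subseteq> gens X Y f1"
proof
  fix p assume "p \<in> gens X Z (f2 \<circ> f1)"
  then obtain g h where p: "p = (\<lambda>x. g x * h (f2 (f1 x)))" and g: "g \<in> Cb X" and h: "h \<in> C0 Z"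
    unfolding gens_def by auto
  define h' where "h' = (\<lambda>y. if y \<in> topspace Y then h (f2 y) else 0)"
  have "h' \<in> C0 Y"
    unfolding h'_def using C0_comp_proper_map[OF assms(1,2) h] .
  moreover have "p = (\<lambda>x. g x * h' (f1 x))"
    using g assms(3) unfolding p h'_def Cb_def continuous_map_def by fastforce
  ultimately show "p \<in> gens X Y f1"
    unfolding gens_def using g by blast
qed

lemma C0_cutoff:
  assumes "locally_compact_space Z" "Hausdorff_space Z" "compactin Z L"
  obtains k where "k \<in> C0 Z" "\<forall>z \<in> L. k z = 1" "\<forall>z. norm (1 - k z) \<le> 1"
proof -
  have "\<forall>K. compactin Z K \<longrightarrow> (\<exists>U C. openin Z U \<and> compactin Z C \<and> closedin Z C \<and> K \<subseteq> U \<and> U \<subseteq> C)"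
    using locally_compact_space_compact_closed_compact[OF disjI1[OF assms(2)]] assms(1) by blast
  then obtain U C where UC: "openin Z U" "compactin Z C" "L \<subseteq> U" "U \<subseteq> C"
    using assms(3) by blast
  have "completely_regular_space Z"
    using assms(1,2) locally_compact_regular_imp_completely_regular_space by blast
  moreover have "closedin Z (topspace Z - U)"
    using UC(1) by blast
  moreover have "disjnt L (topspace Z - U)"
    using UC(3) by (auto simp: disjnt_def)
  ultimately obtain \<phi> where \<phi>: "continuous_map Z (top_of_set {0..1::real}) \<phi>"
    "\<phi> ` (topspace Z - U) \<subseteq> {0}" "\<phi> ` L \<subseteq> {1}"
    by (rule Urysohn_completely_regular_compact_closed[OF zero_le_one _ assms(3)])
  define k where "k = (\<lambda>z. if z \<in> topspace Z then complex_of_real (\<phi> z) else 0)"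
  show thesis
  proof
    show "k \<in> C0 Z"
      unfolding C0_def
    proof (intro CollectI conjI allI impI)
      have "continuous_map Z euclidean (\<lambda>z. complex_of_real (\<phi> z))"
        using \<phi>(1) continuous_map_into_fulltopology continuous_map_of_real by blast
      then show "continuous_map Z euclidean k"
        by (rule continuous_map_eq) (simp add: k_def)
    next
      fix e :: real assume "e > 0"
      have "\<forall>z \<in> topspace Z - C. k z = 0"
        using \<phi>(2) UC(4) by (auto simp: k_def)
      then show "\<exists>K. compactin Z K \<and> (\<forall>z \<in> topspace Z - K. norm (k z) < e)"
        using UC(2) \<open>e > 0\<close> by (intro exI[of _ C]) simp
    qed (simp add: k_def)
    show "\<forall>z \<in> L. k z = 1"
      using \<phi>(3) compactin_subset_topspace[OF assms(3)] by (auto simp: k_def)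
    show "\<forall>z. norm (1 - k z) \<le> 1"
    proof
      fix z
      show "norm (1 - k z) \<le> 1"
      proof (cases "z \<in> topspace Z")
        case True
        then have "\<phi> z \<in> {0..1}"
          using \<phi>(1) unfolding continuous_map_in_subtopology by blast
        moreover have "norm (1 - k z) = \<bar>1 - \<phi> z\<bar>"
          using True by (metis k_def norm_of_real of_real_1 of_real_diff)
        ultimately show ?thesis by simp
      qed (simp add: k_def)
    qed
  qed
qed

lemma gens_uniformly_approximable_comp:
  assumes "locally_compact_space Z" "Hausdorff_space Z"
    and f2: "continuous_map Y Z f2" and f1: "continuous_map X Y f1"
    and "p \<in> gens X Y f1"
  shows "uniformly_approximable X (gens X Z (f2 \<circ> f1)) p"
  unfolding uniformly_approximable_def
proof (intro allI impI)
  fix e :: real assume "e > 0"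
  obtain g h where p: "p = (\<lambda>x. g x * h (f1 x))" and g: "g \<in> Cb X" and h: "h \<in> C0 Y"
    using assms(5) unfolding gens_def by blast
  obtain M where M: "M > 0" "\<forall>x \<in> topspace X. norm (g x) \<le> M"
    using Cb_bound[OF g] .
  have "\<forall>t>0. \<exists>K. compactin Y K \<and> (\<forall>y \<in> topspace Y - K. norm (h y) < t)"
    using h unfolding C0_def by blast
  then obtain K where K: "compactin Y K" "\<forall>y \<in> topspace Y - K. norm (h y) < e / M"
    using \<open>e > 0\<close> M(1) divide_pos_pos by blast
  obtain k where k: "k \<in> C0 Z" "\<forall>z \<in> f2 ` K. k z = 1" "\<forall>z. norm (1 - k z) \<le> 1"
    using C0_cutoff[OF assms(1,2) image_compactin[OF K(1) f2]] .
  obtain Mh where "\<forall>y \<in> topspace Y. norm (h y) \<le> Mh"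
    using C0_bound[OF h] .
  moreover have "continuous_map Y euclidean h"
    using h unfolding C0_def by blast
  ultimately have "(\<lambda>x. g x * h (f1 x)) \<in> Cb X"
    using Cb_mult_comp[OF g f1] by blast
  then have "(\<lambda>x. g x * h (f1 x) * k ((f2 \<circ> f1) x)) \<in> gens X Z (f2 \<circ> f1)"
    unfolding gens_def using k(1) by (auto intro!: exI[of _ "\<lambda>x. g x * h (f1 x)"])
  then have q: "(\<lambda>x. g x * h (f1 x) * k ((f2 \<circ> f1) x)) \<in> lin_span (gens X Z (f2 \<circ> f1))"
    by (rule lin_span_superset)
  have "norm (p x - g x * h (f1 x) * k (f2 (f1 x))) \<le> e" if x: "x \<in> topspace X" for x
  proof (cases "f1 x \<in> K")
    case True
    then show ?thesis using k(2) \<open>e > 0\<close> by (simp add: p)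
  next
    case False
    moreover have "f1 x \<in> topspace Y"
      using x continuous_map_image_subset_topspace[OF f1] by blast
    ultimately have "norm (h (f1 x)) \<le> e / M"
      using K(2) less_imp_le by blast
    have "p x - g x * h (f1 x) * k (f2 (f1 x)) = g x * h (f1 x) * (1 - k (f2 (f1 x)))"
      by (simp add: p algebra_simps)
    then have "norm (p x - g x * h (f1 x) * k (f2 (f1 x)))
        = norm (g x) * norm (h (f1 x)) * norm (1 - k (f2 (f1 x)))"
      by (simp add: norm_mult)
    also have "\<dots> \<le> M * (e / M) * 1"
      using M x k(3) \<open>norm (h (f1 x)) \<le> e / M\<close> \<open>e > 0\<close> by (intro mult_mono) auto
    also have "\<dots> = e"
      using M(1) by simp
    finally show ?thesis .
  qed
  then show "\<exists>s \<in> lin_span (gens X Z (f2 \<circ> f1)). \<forall>x \<in> topspace X. norm (p x - s x) \<le> e"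
    by (intro bexI[OF _ q]) simp
qed

theorem lemma4p12:
  fixes X :: "'a topology" and Y :: "'b topology" and Z :: "'c topology"
    and f1 :: "'a \<Rightarrow> 'b" and f2 :: "'b \<Rightarrow> 'c"
  assumes "locally_compact_space Y" and "Hausdorff_space Y"
    and "locally_compact_space Z" and "Hausdorff_space Z"
    and "continuous_map X Y f1"
    and "proper_map Y Z f2" and "continuous_map Y Z f2"
  shows "rel_beta X Y f1 homeomorphic_space rel_beta X Z (f2 \<circ> f1)"
proof -
  have "\<forall>p \<in> gens X Y f1. uniformly_approximable X (gens X Z (f2 \<circ> f1)) p"
    using gens_uniformly_approximable_comp[OF assms(3,4,7,5)] by blast
  moreover have "\<forall>p \<in> gens X Z (f2 \<circ> f1). uniformly_approximable X (gens X Y f1) p"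
    using gens_comp_proper_map_subset[OF assms(6,7,5)]
    by (blast intro: uniformly_approximable_lin_span lin_span_superset)
  ultimately have "Halg X Y f1 = Halg X Z (f2 \<circ> f1)"
    unfolding Halg_eq_uniformly_approximable by (blast intro: uniformly_approximable_trans)
  then show ?thesis
    unfolding rel_beta_def by simp
qed

end
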